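(* Let $H,H'$ be heaps with $H\subseteq H'$. Then: (1) for all addresses $a$ and $n\in\mathbb N$, if $H[a,n]$ is defined then $H[a,n]=H'[a,n]$; (2) for all terms $s,s'$, addresses $a$ and $k\in\mathbb N$, if $\langle s,a\rangle\triangleright^H_k s'$ then $\langle s,a\rangle\triangleright^{H'}_k s'$; (3) for every closure $g$ and term $s$, if $g\gg_H s$ then $g\gg_{H'} s$.
   Context: Terms (de Bruijn): $s::=n\mid st\mid\lambda s$. Programs are lists of commands $\mathsf{ret},\mathsf{var}\,n,\mathsf{lam},\mathsf{app}$; $\gamma n=[\mathsf{var}\,n]$, $\gamma(st)=\gamma s++\gamma t++[\mathsf{app}]$, $\gamma(\lambda s)=\mathsf{lam}::\gamma s++[\mathsf{ret}]$. $P\gg s$ iff $P=\gamma u$ and $s=\lambda u$. A closure is a pair $(P,a)$ (program, address $a\in\mathbb N$); a heap entry is a pair $(g,b)$ (closure, address); a heap $H$ is a list of entries; $H[a]$ is the $a$-th entry for $1\le a\le|H|$, undefined otherwise. Heap extension: $H\subseteq H'$ iff for every address $a$, if $H[a]$ is defined then $H[a]=H'[a]$. Lookup: if $H[a]=(g,b)$ then $H[a,0]=g$, $H[a,n+1]=H[b,n]$; else undefined. Unfolding $\langle s,a\rangle\triangleright^H_k s'$: $\langle n,a\rangle\triangleright^H_k n$ if $n<k$; $\langle n,a\rangle\triangleright^H_k s'$ if $n\ge k$, $H[a,n-k]=(P,b)$, $P\gg u$, $\langle u,b\rangle\triangleright^H_0 s'$; $\langle\lambda s,a\rangle\triangleright^H_k\lambda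 s'$ if $\langle s,a\rangle\triangleright^H_{k+1}s'$; $\langle st,a\rangle\triangleright^H_k s't'$ if $\langle s,a\rangle\triangleright^H_k s'$ and $\langle t,a\rangle\triangleright^H_k t'$. $(P,a)\gg_H s$ iff $P\gg u$ and $\langle u,a\rangle\triangleright^H_0 s$ for some $u$. *)

theory Defs
  imports Main
begin

datatype tm = Var nat | App "tm" "tm" | Lam "tm"

datatype cmd = Ret | VarC nat | LamC | AppC

fun gamma :: "tm \<Rightarrow> cmd list" where
  "gamma (Var n) = [VarC n]"
| "gamma (App s t) = gamma s @ gamma t @ [AppC]"
| "gamma (Lam s) = LamC # gamma s @ [Ret]"

definition prog_rep :: "cmd list \<Rightarrow> tm \<Rightarrow> bool" where
  "prog_rep P s \<longleftrightarrow> (\<exists>u. P = gamma u \<and> s = Lam u)"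

type_synonym clos = "cmd list \<times> nat"
type_synonym heap = "(clos \<times> nat) list"

(* H[a]: the a-th entry (1-based), undefined (None) otherwise *)
definition get :: "heap \<Rightarrow> nat \<Rightarrow> (clos \<times> nat) option" where
  "get H a = (if 1 \<le> a \<and> a \<le> length H then Some (H ! (a - 1)) else None)"

definition heap_ext :: "heap \<Rightarrow> heap \<Rightarrow> bool" where
  "heap_ext H H' \<longleftrightarrow> (\<forall>a. get H a \<noteq> None \<longrightarrow> get H a = get H' a)"

fun lookup :: "heap \<Rightarrow> nat \<Rightarrow> nat \<Rightarrow> clos option" where
  "lookup H a 0 = (case get H a of Some (g, b) \<Rightarrow> Some g | None \<Rightarrow> None)"
| "lookup H a (Suc n) = (case get H a of Some (g, b) \<Rightarrow> lookup H b n | None \<Rightarrow> None)"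

inductive unfolds :: "heap \<Rightarrow> tm \<Rightarrow> nat \<Rightarrow> nat \<Rightarrow> tm \<Rightarrow> bool" for H where
  U_var_bound: "n < k \<Longrightarrow> unfolds H (Var n) a k (Var n)"
| U_var_free: "\<lbrakk>n \<ge> k; lookup H a (n - k) = Some (P, b); prog_rep P u; unfolds H u b 0 s'\<rbrakk>
     \<Longrightarrow> unfolds H (Var n) a k s'"
| U_lam: "unfolds H s a (Suc k) s' \<Longrightarrow> unfolds H (Lam s) a k (Lam s')"
| U_app: "\<lbrakk>unfolds H s a k s'; unfolds H t a k t'\<rbrakk> \<Longrightarrow> unfolds H (App s t) a k (App s' t')"

definition clos_rep :: "heap \<Rightarrow> clos \<Rightarrow> tm \<Rightarrow> bool" where
  "clos_rep H g s \<longleftrightarrow> (\<exists>u. prog_rep (fst g) u \<and> unfolds H u (snd g) 0 s)"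

end

theory Submission
  imports Defs
begin

lemma heap_ext_get:
  assumes "heap_ext H H'" and "get H a = Some e"
  shows "get H' a = Some e"
  using assms unfolding heap_ext_def by (metis option.distinct(1))

lemma heap_ext_lookup:
  assumes ext: "heap_ext H H'" and "lookup H a n = Some g"
  shows "lookup H' a n = Some g"
  using assms(2)
proof (induction n arbitrary: a)
  case 0
  then obtain e where "get H a = Some e" by (auto split: option.splits)
  with 0 show ?case using heap_ext_get[OF ext] by (auto split: prod.splits)
next
  case (Suc n)
  then obtain g' b where e: "get H a = Some (g', b)" and "lookup H b n = Some g"
    by (auto split: option.splits)
  then show ?case using Suc.IH heap_ext_get[OF ext e] by simp
qed

lemma heap_ext_unfolds:
  assumes ext: "heap_ext H H'" and "unfolds H s a k s'"
  shows "unfolds H' s a k s'"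
  using assms(2)
proof (induction rule: unfolds.induct)
  case (U_var_free k n a P b u s')
  then show ?case
    using heap_ext_lookup[OF ext] by (blast intro: unfolds.U_var_free)
qed (auto intro: unfolds.intros)

lemma heap_ext_clos_rep:
  assumes "heap_ext H H'" and "clos_rep H g s"
  shows "clos_rep H' g s"
  using assms heap_ext_unfolds unfolding clos_rep_def by blast

theorem mainTheorem17:
  fixes H H' :: heap
  assumes "heap_ext H H'"
  shows "(\<forall>a n. lookup H a n \<noteq> None \<longrightarrow> lookup H a n = lookup H' a n)
       \<and> (\<forall>s s' a k. unfolds H s a k s' \<longrightarrow> unfolds H' s a k s')
       \<and> (\<forall>g s. clos_rep H g s \<longrightarrow> clos_rep H' g s)"
  using heap_ext_lookup[OF assms] heap_ext_unfolds[OF assms] heap_ext_clos_rep[OF assms]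
  by fastforce

end
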